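(* For every $M_q=\begin{pmatrix}\mathcal{R}(q) & \mathcal{V}(q)\\ \mathcal{S}(q) & \mathcal{U}(q)\end{pmatrix}\in G_q$, the polynomial $q^2-q+1$ divides $\mathcal{V}(q)\,q^4+(\mathcal{U}(q)-\mathcal{R}(q))\,q^2-\mathcal{S}(q)$ in $\mathbb{Z}[q,q^{-1}]$.
   Context: Let $q$ be a formal parameter and let $R_q=\begin{pmatrix} q & 1\\ 0 & 1\end{pmatrix}$, $S_q=\begin{pmatrix} 0 & -q^{-1}\\ 1 & 0\end{pmatrix}\in \mathrm{GL}(2,\mathbb{Z}[q,q^{-1}])$. Let $G_q=\langle R_q,S_q\rangle$ be the group they generate. *)

theory Defs
  imports "HOL-Computational_Algebra.Formal_Laurent_Series"
begin

text \<open>Z[q,q^-1] is realised inside the formal Laurent series ring int fls as the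
  Laurent series with finitely many nonzero coefficients; q is fls_X.\<close>

definition laurent_poly :: "int fls set" where
  "laurent_poly = {f. finite {n. fls_nth f n \<noteq> 0}}"

type_synonym mat2 = "int fls \<times> int fls \<times> int fls \<times> int fls"

fun mmul :: "mat2 \<Rightarrow> mat2 \<Rightarrow> mat2" where
  "mmul (a, b, c, d) (a', b', c', d') =
     (a * a' + b * c', a * b' + b * d', c * a' + d * c', c * b' + d * d')"

definition mat_id :: mat2 where "mat_id = (1, 0, 0, 1)"

definition R_q :: mat2 where "R_q = (fls_X, 1, 0, 1)"

definition S_q :: mat2 where "S_q = (0, - fls_X_inv, 1, 0)"

inductive_set G_q :: "mat2 set" where
  id_in: "mat_id \<in> G_q"
| R_in: "R_q \<in> G_q"
| S_in: "S_q \<in> G_q"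
| mult_in: "A \<in> G_q \<Longrightarrow> B \<in> G_q \<Longrightarrow> mmul A B \<in> G_q"
| inv_in: "A \<in> G_q \<Longrightarrow> mmul A B = mat_id \<Longrightarrow> mmul B A = mat_id \<Longrightarrow> B \<in> G_q"

end

theory Submission
  imports Defs
begin

text \<open>Put \<open>w = (-1, q\<^sup>2)\<close>. Every \<open>M = (r, v, s, u)\<close> satisfies \<open>M w = \<lambda> M \<cdot> w + (0, T M)\<close> with
  \<open>\<lambda> M = r - v q\<^sup>2\<close> (\<open>eigen_value\<close>) and \<open>T M = v q\<^sup>4 + (u - r) q\<^sup>2 - s\<close> (\<open>eigen_defect\<close>),
  so \<open>T M\<close> measures how far \<open>w\<close> is from being an eigenvector of \<open>M\<close>. Expanding \<open>A B w\<close>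
  expresses \<open>T (A B)\<close> as a Laurent-polynomial combination of \<open>T A\<close> and \<open>T B\<close>, and \<open>T\<close> of an
  inverse as a multiple of \<open>T A\<close>. As \<open>q\<^sup>2 - q + 1\<close> divides \<open>T R\<^sub>q\<close> and \<open>T S\<^sub>q\<close>, it divides
  \<open>T M\<close> for all \<open>M \<in> G\<^sub>q\<close>. Geometrically: modulo \<open>q\<^sup>2 - q + 1\<close> the point \<open>-q\<^sup>-\<^sup>2\<close> is \<open>q\<close>,
  a primitive sixth root of unity, and it is a common fixed point of the Moebius action of \<open>G\<^sub>q\<close>.

  The entries of a matrix obtained by the rule \<open>inv_in\<close> are a priori arbitrary Laurent series;
  they are Laurent polynomials because inverses in a monoid are unique.\<close>

lemma laurent_poly_iff_eventually_zero:
  "f \<in> laurent_poly \<longleftrightarrow> (\<exists>N. \<forall>n>N. fls_nth f n = 0)"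
proof
  assume "f \<in> laurent_poly"
  then have "bdd_above {n. fls_nth f n \<noteq> 0}"
    by (simp add: laurent_poly_def bdd_above_finite)
  then show "\<exists>N. \<forall>n>N. fls_nth f n = 0"
    by (meson bdd_above_def leD mem_Collect_eq)
next
  assume "\<exists>N. \<forall>n>N. fls_nth f n = 0"
  then obtain N where "\<forall>n>N. fls_nth f n = 0" by blast
  then have "{n. fls_nth f n \<noteq> 0} \<subseteq> {fls_subdegree f..N}"
    by (auto simp: not_less[symmetric] intro: fls_eq0_below_subdegree)
  then show "f \<in> laurent_poly"
    unfolding laurent_poly_def using finite_subset by blast
qed

lemma laurent_poly_add: "f \<in> laurent_poly \<Longrightarrow> g \<in> laurent_poly \<Longrightarrow> f + g \<in> laurent_poly"
  unfolding laurent_poly_iff_eventually_zero by (metis add.right_neutral fls_plus_nth max.strict_boundedE)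

lemma laurent_poly_uminus: "f \<in> laurent_poly \<Longrightarrow> - f \<in> laurent_poly"
  unfolding laurent_poly_iff_eventually_zero by auto

lemma laurent_poly_diff: "f \<in> laurent_poly \<Longrightarrow> g \<in> laurent_poly \<Longrightarrow> f - g \<in> laurent_poly"
  using laurent_poly_add laurent_poly_uminus by (metis diff_conv_add_uminus)

lemma laurent_poly_mult:
  assumes "f \<in> laurent_poly" "g \<in> laurent_poly"
  shows "f * g \<in> laurent_poly"
proof -
  obtain M where M: "\<forall>n>M. fls_nth f n = 0"
    using assms(1) unfolding laurent_poly_iff_eventually_zero by blast
  obtain N where N: "\<forall>n>N. fls_nth g n = 0"
    using assms(2) unfolding laurent_poly_iff_eventually_zero by blast
  have "fls_nth (f * g) n = 0" if "n > M + N" for n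
  proof -
    have "fls_nth f i * fls_nth g (n - i) = 0" for i
    proof (cases "i > M")
      case False
      then have "n - i > N"
        using that by linarith
      then show ?thesis
        using N by simp
    qed (use M in simp)
    then show ?thesis
      unfolding fls_times_nth(2) by (intro sum.neutral) blast
  qed
  then show ?thesis
    unfolding laurent_poly_iff_eventually_zero by blast
qed

lemma laurent_poly_zero: "0 \<in> laurent_poly"
  unfolding laurent_poly_iff_eventually_zero by simp

lemma laurent_poly_one: "1 \<in> laurent_poly"
  unfolding laurent_poly_iff_eventually_zero by (metis fls_one_nth less_irrefl)

lemma laurent_poly_X: "fls_X \<in> laurent_poly"
  unfolding laurent_poly_iff_eventually_zero by (rule exI[of _ 1]) simp

lemma laurent_poly_X_inv: "fls_X_inv \<in> laurent_poly"
  unfolding laurent_poly_iff_eventually_zero by (rule exI[of _ 0]) simp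

lemma laurent_poly_power: "f \<in> laurent_poly \<Longrightarrow> f ^ n \<in> laurent_poly"
  by (induction n) (auto intro: laurent_poly_mult laurent_poly_one)

lemmas laurent_poly_closed =
  laurent_poly_add laurent_poly_uminus laurent_poly_diff laurent_poly_mult
  laurent_poly_zero laurent_poly_one laurent_poly_X laurent_poly_X_inv laurent_poly_power

lemma fls_X_times_X_inv: "fls_X * fls_X_inv = (1 :: int fls)"
  by (rule fls_eqI) (simp add: fls_X_inv_times_conv_shift)

lemma fls_X_inv_times_X: "fls_X_inv * fls_X = (1 :: int fls)"
  by (simp add: fls_X_times_X_inv mult.commute)

definition laurent_mat :: "mat2 set" where
  "laurent_mat = laurent_poly \<times> laurent_poly \<times> laurent_poly \<times> laurent_poly"

lemma mmul_laurent_mat: "A \<in> laurent_mat \<Longrightarrow> B \<in> laurent_mat \<Longrightarrow> mmul A B \<in> laurent_mat"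
  by (cases A, cases B) (auto simp: laurent_mat_def intro!: laurent_poly_closed)

lemma mmul_assoc: "mmul (mmul A B) C = mmul A (mmul B C)"
  by (cases A, cases B, cases C) (simp add: algebra_simps)

lemma mmul_id_left [simp]: "mmul mat_id A = A"
  by (cases A) (simp add: mat_id_def)

lemma mmul_id_right [simp]: "mmul A mat_id = A"
  by (cases A) (simp add: mat_id_def)

lemma mmul_inverse_unique:
  assumes "mmul B A = mat_id" "mmul A C = mat_id"
  shows "B = C"
  by (metis assms mmul_assoc mmul_id_left mmul_id_right)

lemma G_q_invertible_in_laurent_mat:
  "M \<in> G_q \<Longrightarrow>
     M \<in> laurent_mat \<and> (\<exists>N \<in> laurent_mat. mmul M N = mat_id \<and> mmul N M = mat_id)"
proof (induction rule: G_q.induct)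
  case id_in
  show ?case
    by (auto simp: laurent_mat_def mat_id_def intro!: bexI[of _ mat_id] laurent_poly_closed)
next
  case R_in
  let ?R_inv = "(fls_X_inv, - fls_X_inv, 0, 1)"
  have "mmul R_q ?R_inv = mat_id" "mmul ?R_inv R_q = mat_id"
    by (simp_all add: R_q_def mat_id_def fls_X_times_X_inv fls_X_inv_times_X)
  moreover have "R_q \<in> laurent_mat" "?R_inv \<in> laurent_mat"
    by (auto simp: laurent_mat_def R_q_def intro!: laurent_poly_closed)
  ultimately show ?case
    by blast
next
  case S_in
  let ?S_inv = "(0, 1, - fls_X, 0)"
  have "mmul S_q ?S_inv = mat_id" "mmul ?S_inv S_q = mat_id"
    by (simp_all add: S_q_def mat_id_def fls_X_times_X_inv fls_X_inv_times_X)
  moreover have "S_q \<in> laurent_mat" "?S_inv \<in> laurent_mat"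
    by (auto simp: laurent_mat_def S_q_def intro!: laurent_poly_closed)
  ultimately show ?case
    by blast
next
  case (mult_in A B)
  then obtain A' B' where "A' \<in> laurent_mat" "mmul A A' = mat_id" "mmul A' A = mat_id"
    "B' \<in> laurent_mat" "mmul B B' = mat_id" "mmul B' B = mat_id"
    by blast
  then have "mmul (mmul A B) (mmul B' A') = mat_id" "mmul (mmul B' A') (mmul A B) = mat_id"
    by (simp_all add: mmul_assoc flip: mmul_assoc[of B B'] mmul_assoc[of A' A])
  then show ?case
    using mult_in \<open>A' \<in> laurent_mat\<close> \<open>B' \<in> laurent_mat\<close> by (blast intro: mmul_laurent_mat)
next
  case (inv_in A B)
  then obtain A' where "A' \<in> laurent_mat" "mmul A A' = mat_id"
    by blast
  with inv_in have "B = A'"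
    using mmul_inverse_unique by blast
  then show ?case
    using inv_in \<open>A' \<in> laurent_mat\<close> by blast
qed

lemma G_q_subset_laurent_mat: "G_q \<subseteq> laurent_mat"
  using G_q_invertible_in_laurent_mat by blast

definition eigen_value :: "mat2 \<Rightarrow> int fls" where
  "eigen_value M = (case M of (r, v, s, u) \<Rightarrow> r - v * fls_X ^ 2)"

definition eigen_defect :: "mat2 \<Rightarrow> int fls" where
  "eigen_defect M = (case M of (r, v, s, u) \<Rightarrow> v * fls_X ^ 4 + (u - r) * fls_X ^ 2 - s)"

lemma eigen_value_id [simp]: "eigen_value mat_id = 1"
  by (simp add: eigen_value_def mat_id_def)

lemma eigen_defect_id [simp]: "eigen_defect mat_id = 0"
  by (simp add: eigen_defect_def mat_id_def)

lemma eigen_value_mmul: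
  "eigen_value (mmul (a, b, c, d) B) = eigen_value (a, b, c, d) * eigen_value B - b * eigen_defect B"
  by (cases B) (simp add: eigen_value_def eigen_defect_def algebra_simps power_numeral_reduce)

lemma eigen_defect_mmul:
  "eigen_defect (mmul (a, b, c, d) B) =
     eigen_value B * eigen_defect (a, b, c, d) + (b * fls_X ^ 2 + d) * eigen_defect B"
  by (cases B) (simp add: eigen_value_def eigen_defect_def algebra_simps power_numeral_reduce)

text \<open>Multiply \<open>T B\<close> by \<open>1 = \<lambda> (B A)\<close> and use \<open>0 = T (B A)\<close> to eliminate \<open>\<lambda> A \<cdot> T B\<close>.\<close>

lemma eigen_defect_left_inverse:
  assumes "mmul (a, b, c, d) A = mat_id"
  shows "eigen_defect (a, b, c, d) =
           eigen_defect A * - (b * eigen_defect (a, b, c, d)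
                               + eigen_value (a, b, c, d) * (b * fls_X ^ 2 + d))"
proof -
  let ?B = "(a, b, c, d)"
  have eigen_value_BA: "eigen_value ?B * eigen_value A - b * eigen_defect A = 1"
    using eigen_value_mmul[of a b c d A] assms by simp
  have "eigen_value A * eigen_defect ?B + (b * fls_X ^ 2 + d) * eigen_defect A = 0"
    using eigen_defect_mmul[of a b c d A] assms by (simp add: algebra_simps)
  then have eigen_defect_BA:
    "eigen_value A * eigen_defect ?B = - ((b * fls_X ^ 2 + d) * eigen_defect A)"
    by (simp add: eq_neg_iff_add_eq_0)
  have "eigen_defect ?B = (eigen_value ?B * eigen_value A - b * eigen_defect A) * eigen_defect ?B"
    by (simp add: eigen_value_BA)
  also have "\<dots> = eigen_value ?B * (eigen_value A * eigen_defect ?B)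
                  - b * eigen_defect A * eigen_defect ?B"
    by (simp add: algebra_simps)
  also have "\<dots> = eigen_defect A * - (b * eigen_defect ?B + eigen_value ?B * (b * fls_X ^ 2 + d))"
    by (simp add: eigen_defect_BA algebra_simps)
  finally show ?thesis .
qed

definition laurent_dvd :: "int fls \<Rightarrow> int fls \<Rightarrow> bool" where
  "laurent_dvd p f \<longleftrightarrow> (\<exists>c \<in> laurent_poly. f = p * c)"

lemma laurent_dvd_zero: "laurent_dvd p 0"
  unfolding laurent_dvd_def using laurent_poly_zero by auto

lemma laurent_dvd_add: "laurent_dvd p f \<Longrightarrow> laurent_dvd p g \<Longrightarrow> laurent_dvd p (f + g)"
  unfolding laurent_dvd_def by (metis distrib_left laurent_poly_add)

lemma laurent_dvd_mult: "g \<in> laurent_poly \<Longrightarrow> laurent_dvd p f \<Longrightarrow> laurent_dvd p (g * f)"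
  unfolding laurent_dvd_def by (metis laurent_poly_mult mult.left_commute)

lemma laurent_dvd_mult_right: "g \<in> laurent_poly \<Longrightarrow> laurent_dvd p f \<Longrightarrow> laurent_dvd p (f * g)"
  by (metis laurent_dvd_mult mult.commute)

lemma eigen_defect_in_laurent_poly: "M \<in> laurent_mat \<Longrightarrow> eigen_defect M \<in> laurent_poly"
  by (cases M) (auto simp: laurent_mat_def eigen_defect_def intro!: laurent_poly_closed)

lemma eigen_value_in_laurent_poly: "M \<in> laurent_mat \<Longrightarrow> eigen_value M \<in> laurent_poly"
  by (cases M) (auto simp: laurent_mat_def eigen_value_def intro!: laurent_poly_closed)

lemma eigen_defect_R_q: "eigen_defect R_q = (fls_X ^ 2 - fls_X + 1) * fls_X ^ 2"
  by (simp add: eigen_defect_def R_q_def algebra_simps power_numeral_reduce)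

lemma eigen_defect_S_q: "eigen_defect S_q = (fls_X ^ 2 - fls_X + 1) * (- fls_X - 1)"
  by (simp add: eigen_defect_def S_q_def algebra_simps power_numeral_reduce fls_X_times_X_inv)

lemma laurent_dvd_eigen_defect_G_q:
  "M \<in> G_q \<Longrightarrow> laurent_dvd (fls_X ^ 2 - fls_X + 1) (eigen_defect M)"
proof (induction rule: G_q.induct)
  case id_in
  show ?case by (simp add: laurent_dvd_zero)
next
  case R_in
  show ?case
    unfolding laurent_dvd_def eigen_defect_R_q by (blast intro: laurent_poly_closed)
next
  case S_in
  show ?case
    unfolding laurent_dvd_def eigen_defect_S_q by (blast intro: laurent_poly_closed)
next
  case (mult_in A B)
  obtain a b c d where A: "A = (a, b, c, d)" by (cases A)
  have "A \<in> laurent_mat" "B \<in> laurent_mat"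
    using mult_in.hyps G_q_subset_laurent_mat by auto
  then have "eigen_value B \<in> laurent_poly" "b * fls_X ^ 2 + d \<in> laurent_poly"
    by (auto simp: A laurent_mat_def intro: eigen_value_in_laurent_poly laurent_poly_closed)
  then show ?case
    using mult_in.IH unfolding A eigen_defect_mmul
    by (intro laurent_dvd_add laurent_dvd_mult)
next
  case (inv_in A B)
  obtain a b c d where B: "B = (a, b, c, d)" by (cases B)
  have "B \<in> laurent_mat"
    using inv_in.hyps G_q.inv_in G_q_subset_laurent_mat by blast
  then have "- (b * eigen_defect B + eigen_value B * (b * fls_X ^ 2 + d)) \<in> laurent_poly"
    by (auto simp: B laurent_mat_def
        intro!: eigen_value_in_laurent_poly eigen_defect_in_laurent_poly laurent_poly_closed)
  then show ?case
    using inv_in.IH eigen_defect_left_inverse[OF inv_in.hyps(3)[unfolded B]] unfolding B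
    by (metis laurent_dvd_mult_right)
qed

theorem corollary5p1:
  assumes "(r, v, s, u) \<in> G_q"
  shows "\<exists>c \<in> laurent_poly.
           v * fls_X ^ 4 + (u - r) * fls_X ^ 2 - s = (fls_X ^ 2 - fls_X + 1) * c"
  using laurent_dvd_eigen_defect_G_q[OF assms] by (simp add: laurent_dvd_def eigen_defect_def)

end
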